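(* Let $(Z_0,\dots,Z_H)$ be a process on an abstract state space $\mathcal{Z}$, fix $t\in\{1,\dots,H\}$, and consider two hypotheses $H_0,H_1$ under which $Z_t$ has distributions $P^{(0)}_{Z_t}\ll P^{(1)}_{Z_t}$ with $\chi^2(P^{(0)}_{Z_t}\|P^{(1)}_{Z_t})=\Delta^2<\infty$, and under which, for $u\in\{t,\dots,H-1\}$, $Z_{u+1}$ given $Z_t,\dots,Z_u$ is distributed as $K_u(\cdot\mid Z_u)$ for Markov kernels $K_u$ common to both hypotheses with $\eta_{\chi^2}(K_u)\le\eta<1$. Let $R=g(Z_H)\in\{0,1\}$ for a fixed function $g$, and let $R^{1:n}$ denote $n$ i.i.d. samples of $R$ (drawn under $H_i$ when hypothesis $H_i$ holds, with $\mathbb{P}_i$ the corresponding probability). Fix $\epsilon\in(0,1/2)$. Then $$\inf_{\psi}\max_{i\in\{0,1\}}\mathbb{P}_i\big(\psi(R^{1:n})\neq i\big)\ \ge\ \frac12\left(1-\sqrt{\frac{(1+\eta^{H-t}\Delta^2)^n-1}{2}}\right),$$ where the infimum is over all tests $\psi:\{0,1\}^n\to\{0,1\}$. In particular, if $$n\le \frac{\ln\big(1+2(1-2\epsilon)^2\big)}{\eta^{H-t}\Delta^2},$$ then every test $\psi$ has $\max_{i\in\{0,1\}}\mathbb{P}_i(\psi(R^{1:n})\neq i)\ge\epsilon$.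
   Context: For distributions $P\ll Q$, $\chi^2(P\|Q)=\int (dP/dQ-1)^2\,dQ$. For a Markov kernel $K$, $PK$ is the pushforward $\int K(\cdot\mid x)\,dP(x)$, and the $\chi^2$-contraction coefficient is $\eta_{\chi^2}(K)=\sup\{\chi^2(PK\|QK)/\chi^2(P\|Q): P\ll Q,\ 0<\chi^2(P\|Q)<\infty\}$. *)

theory Defs
  imports "HOL-Probability.Probability"
begin

text \<open>Chi-square divergence chi2(P||Q) = integral of (dP/dQ - 1)^2 dQ for P << Q
  (value infinity when P is not absolutely continuous w.r.t. Q).
  Note: absolutely_continuous Q P means P << Q.\<close>
definition chi2 :: "'a measure \<Rightarrow> 'a measure \<Rightarrow> ennreal" where
  "chi2 P Q =
     (if absolutely_continuous Q P
      then (\<integral>\<^sup>+ x. ennreal ((enn2real (RN_deriv Q P x) - 1)\<^sup>2) \<partial>Q)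
      else \<infinity>)"

definition chi2_contraction :: "'a measure \<Rightarrow> ('a \<Rightarrow> 'a measure) \<Rightarrow> ennreal" where
  "chi2_contraction M K =
     (SUP PQ \<in> {(P, Q). P \<in> space (prob_algebra M) \<and> Q \<in> space (prob_algebra M) \<and>
                       absolutely_continuous Q P \<and> 0 < chi2 P Q \<and> chi2 P Q < \<infinity>}.
        chi2 (bind (fst PQ) K) (bind (snd PQ) K) / chi2 (fst PQ) (snd PQ))"

text \<open>Law of Z_{t+k} given law P of Z_t, where Z_{u+1} | Z_u ~ K u.\<close>
fun propagate :: "(nat \<Rightarrow> 'a \<Rightarrow> 'a measure) \<Rightarrow> nat \<Rightarrow> nat \<Rightarrow> 'a measure \<Rightarrow> 'a measure" where
  "propagate K t 0 P = P"
| "propagate K t (Suc k) P = bind (propagate K t k P) (K (t + k))"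

end

theory Submission
  imports Defs
begin

text \<open>Each kernel step contracts the chi-square divergence by the factor \<open>\<eta>\<close>, so
  the laws of \<open>Z\<^sub>H\<close> under the two hypotheses are at chi-square distance at most
  \<open>c = \<eta> ^ (H - t) * \<Delta>\<^sup>2\<close>.  Testing the event \<open>g = True\<close> is a further data
  processing step: the success probabilities \<open>p\<^sub>0, p\<^sub>1\<close> of \<open>R\<close> satisfy
  \<open>(p\<^sub>0 - p\<^sub>1)\<^sup>2 \<le> c p\<^sub>1 (1 - p\<^sub>1)\<close>.  For \<open>n\<close> independent samples the
  second moment of the likelihood ratio is multiplicative, giving \<open>1 + \<chi>\<^sup>2 \<le> (1 + c)\<^sup>n\<close>,
  and Cauchy--Schwarz bounds the total variation distance of the sample laws by
  \<open>sqrt ((1 + c)\<^sup>n - 1) / 2\<close> (sharper than the constant in the statement).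
  Le Cam's two-point argument turns this into the lower bound on the worst-case error, and
  \<open>(1 + c)\<^sup>n \<le> exp (n c)\<close> yields the sample-size condition.\<close>

lemma density_enn2real_RN_deriv:
  assumes "prob_space P" and "prob_space Q" and sets: "sets P = sets Q"
    and ac: "absolutely_continuous Q P"
  shows "density Q (\<lambda>x. ennreal (enn2real (RN_deriv Q P x))) = P"
proof -
  interpret Q: prob_space Q by fact
  interpret P: prob_space P by fact
  have "AE x in Q. RN_deriv Q P x \<noteq> \<infinity>"
    using Q.RN_deriv_finite[OF _ ac sets] P.sigma_finite_measure_axioms by blast
  then have "density Q (\<lambda>x. ennreal (enn2real (RN_deriv Q P x))) = density Q (RN_deriv Q P)"
    by (intro density_cong) (auto simp: ennreal_enn2real_if)
  also have "\<dots> = P"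
    by (rule Q.density_RN_deriv[OF ac sets])
  finally show ?thesis .
qed

lemma (in prob_space) integral_if_event:
  fixes a b :: real
  assumes "A \<in> events"
  shows "(\<integral>x. (if x \<in> A then a else b) \<partial>M) = b + (a - b) * prob A"
proof -
  have "(\<integral>x. (if x \<in> A then a else b) \<partial>M) = (\<integral>x. b + (a - b) * indicator A x \<partial>M)"
    by (intro Bochner_Integration.integral_cong) (auto split: split_indicator)
  also have "\<dots> = b + (a - b) * prob A"
    using assms by (subst Bochner_Integration.integral_add) (auto simp: prob_space emeasure_eq_measure)
  finally show ?thesis .
qed

text \<open>Pointwise \<open>2 f (r - 1) - f\<^sup>2 \<le> (r - 1)\<^sup>2\<close> for the density \<open>r = dP/dQ\<close>.\<close>
lemma chi2_variational_lower_bound: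
  fixes f :: "'a \<Rightarrow> real"
  assumes "prob_space P" and "prob_space Q" and sets: "sets P = sets Q"
    and ac: "absolutely_continuous Q P"
    and f[measurable]: "f \<in> borel_measurable Q" and bounded: "\<And>x. \<bar>f x\<bar> \<le> B"
  shows "ennreal (2 * ((\<integral>x. f x \<partial>P) - (\<integral>x. f x \<partial>Q)) - (\<integral>x. (f x)\<^sup>2 \<partial>Q)) \<le> chi2 P Q"
proof (cases "chi2 P Q = \<infinity>")
  case False
  interpret Q: prob_space Q by fact
  interpret P: prob_space P by fact
  define r where "r x = enn2real (RN_deriv Q P x)" for x
  have r[measurable]: "r \<in> borel_measurable Q"
    unfolding r_def by measurable
  have dens: "density Q (\<lambda>x. ennreal (r x)) = P"
    unfolding r_def by (rule density_enn2real_RN_deriv) fact+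
  have chi2_eq: "chi2 P Q = (\<integral>\<^sup>+x. ennreal ((r x - 1)\<^sup>2) \<partial>Q)"
    using ac by (simp add: chi2_def r_def)
  have int_sq: "integrable Q (\<lambda>x. (r x - 1)\<^sup>2)"
    using False by (intro integrableI_nonneg) (auto simp: chi2_eq top.not_eq_extremum)
  have "(f x)\<^sup>2 \<le> B\<^sup>2" for x
    using power_mono[OF bounded[of x], of 2] by simp
  then have int_f2: "integrable Q (\<lambda>x. (f x)\<^sup>2)"
    by (intro Q.integrable_const_bound[where B = "B\<^sup>2"]) auto
  have int_f: "integrable Q f"
    using bounded by (intro Q.integrable_const_bound[where B = B]) auto
  have r_nonneg: "AE x in Q. 0 \<le> r x"
    by (simp add: r_def)
  have "integrable P f"
    using f bounded by (intro P.integrable_const_bound[where B = B]) (auto simp: measurable_cong_sets[OF sets])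
  then have int_rf: "integrable Q (\<lambda>x. r x * f x)"
    using integrable_density[OF f r r_nonneg] by (simp add: dens)
  have int_P: "(\<integral>x. f x \<partial>P) = (\<integral>x. r x * f x \<partial>Q)"
    using integral_density[OF f r r_nonneg] by (simp add: dens)
  have "2 * ((\<integral>x. f x \<partial>P) - (\<integral>x. f x \<partial>Q)) - (\<integral>x. (f x)\<^sup>2 \<partial>Q)
      = (\<integral>x. 2 * (r x * f x) - 2 * f x - (f x)\<^sup>2 \<partial>Q)"
    using int_f int_f2 int_rf by (simp add: int_P)
  also have "\<dots> \<le> (\<integral>x. (r x - 1)\<^sup>2 \<partial>Q)"
  proof (intro integral_mono)
    show "2 * (r x * f x) - 2 * f x - (f x)\<^sup>2 \<le> (r x - 1)\<^sup>2" for x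
      using zero_le_power2[of "r x - 1 - f x"] by (simp add: power2_eq_square algebra_simps)
  qed (use int_f int_f2 int_rf int_sq in \<open>auto intro!: integrable_diff\<close>)
  finally show ?thesis
    using int_sq by (simp add: chi2_eq nn_integral_eq_integral ennreal_leI)
qed simp

lemma measure_eq_if_absolutely_continuous_0_or_1:
  assumes "prob_space P" and "prob_space Q" and sets: "sets P = sets Q"
    and ac: "absolutely_continuous Q P" and A: "A \<in> sets Q"
    and zero_or_one: "measure Q A = 0 \<or> measure Q A = 1"
  shows "measure P A = measure Q A"
proof -
  interpret Q: prob_space Q by fact
  interpret P: prob_space P by fact
  have null: "measure P B = 0" if "B \<in> sets Q" "measure Q B = 0" for B
    using that ac sets by (auto simp: absolutely_continuous_def Q.emeasure_eq_measure
        P.emeasure_eq_measure null_sets_def)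
  show ?thesis
    using zero_or_one
  proof
    assume "measure Q A = 1"
    then have "measure P (space Q - A) = 0"
      using null[of "space Q - A"] Q.prob_compl[OF A] A by simp
    then show ?thesis
      using P.prob_compl[of A] A sets \<open>measure Q A = 1\<close> by (simp add: sets_eq_imp_space_eq[OF sets])
  qed (use null[OF A] in simp)
qed

lemma event_chi2_le_chi2:
  assumes "prob_space P" and "prob_space Q" and sets: "sets P = sets Q"
    and "absolutely_continuous Q P" and A: "A \<in> sets Q"
    and "0 < measure Q A" and "measure Q A < 1"
  shows "ennreal ((measure P A - measure Q A)\<^sup>2 / (measure Q A * (1 - measure Q A))) \<le> chi2 P Q"
proof -
  interpret Q: prob_space Q by fact
  interpret P: prob_space P by fact
  define p where "p = measure P A"
  define q where "q = measure Q A"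
  define s where "s = 1 - q"
  have "q \<noteq> 0" "s \<noteq> 0"
    using assms by (auto simp: q_def s_def)
  txt \<open>\<open>f\<close> is the likelihood ratio minus one of the two-point laws of \<open>x \<in> A\<close>, the maximiser
    of the variational bound among functions of that event.\<close>
  define a where "a = (p - q) / q"
  define b where "b = - (p - q) / s"
  define f where "f x = (if x \<in> A then a else b)" for x
  have f_meas: "f \<in> borel_measurable Q"
    unfolding f_def using A by (intro measurable_If_set) auto
  have int_P: "(\<integral>x. f x \<partial>P) = b + (a - b) * p"
    using A sets by (simp add: f_def P.integral_if_event p_def)
  have int_Q: "(\<integral>x. f x \<partial>Q) = b + (a - b) * q"
    using A by (simp add: f_def Q.integral_if_event q_def)
  have "(\<integral>x. (f x)\<^sup>2 \<partial>Q) = (\<integral>x. (if x \<in> A then a\<^sup>2 else b\<^sup>2) \<partial>Q)"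
    by (intro Bochner_Integration.integral_cong) (auto simp: f_def)
  also have "\<dots> = a\<^sup>2 * q + b\<^sup>2 * s"
    using A by (simp add: Q.integral_if_event q_def s_def algebra_simps)
  finally have int_sq: "(\<integral>x. (f x)\<^sup>2 \<partial>Q) = a\<^sup>2 * q + b\<^sup>2 * s" .
  have bound: "ennreal (2 * ((\<integral>x. f x \<partial>P) - (\<integral>x. f x \<partial>Q)) - (\<integral>x. (f x)\<^sup>2 \<partial>Q)) \<le> chi2 P Q"
    by (intro chi2_variational_lower_bound[where B = "\<bar>a\<bar> + \<bar>b\<bar>"] f_meas) (auto simp: f_def assms)
  have "(p - q)\<^sup>2 / (q * s) = (p - q)\<^sup>2 * (q + s) / (q * s)"
    by (simp add: s_def)
  also have "\<dots> = 2 * ((\<integral>x. f x \<partial>P) - (\<integral>x. f x \<partial>Q)) - (\<integral>x. (f x)\<^sup>2 \<partial>Q)"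
    using \<open>q \<noteq> 0\<close> \<open>s \<noteq> 0\<close> unfolding int_P int_Q int_sq a_def b_def
    by (simp add: field_simps power2_eq_square)
  finally show ?thesis
    using bound by (simp add: p_def q_def s_def)
qed

lemma prob_diff_sq_le_chi2:
  assumes "prob_space P" and "prob_space Q" and "sets P = sets Q"
    and "absolutely_continuous Q P" and "A \<in> sets Q"
    and "chi2 P Q \<le> ennreal c" and "0 \<le> c"
  shows "(measure P A - measure Q A)\<^sup>2 \<le> c * measure Q A * (1 - measure Q A)"
proof -
  interpret Q: prob_space Q by fact
  consider "measure Q A = 0 \<or> measure Q A = 1" | "0 < measure Q A" "measure Q A < 1"
    using Q.prob_le_1[of A] measure_nonneg[of Q A] by (auto simp: le_less)
  then show ?thesis
  proof cases
    case 1
    then show ?thesis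
      using measure_eq_if_absolutely_continuous_0_or_1[OF assms(1-5)] by auto
  next
    case 2
    have "ennreal ((measure P A - measure Q A)\<^sup>2 / (measure Q A * (1 - measure Q A))) \<le> ennreal c"
      by (rule order.trans[OF event_chi2_le_chi2[OF assms(1-5) 2] assms(6)])
    then show ?thesis
      using 2 \<open>0 \<le> c\<close> by (simp add: ennreal_le_iff pos_divide_le_eq mult.assoc)
  qed
qed

lemma chi2_self:
  assumes "prob_space Q"
  shows "chi2 Q Q = 0"
proof -
  interpret Q: prob_space Q by fact
  have "AE x in Q. 1 = RN_deriv Q Q x"
    by (rule Q.RN_deriv_unique) (auto simp: density_1)
  then have "AE x in Q. ennreal ((enn2real (RN_deriv Q Q x) - 1)\<^sup>2) = 0"
    by eventually_elim simp
  then show ?thesis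
    by (simp add: chi2_def absolutely_continuous_def nn_integral_0_iff_AE)
qed

lemma chi2_eq_0_iff:
  assumes "prob_space P" and "prob_space Q" and "sets P = sets Q"
    and ac: "absolutely_continuous Q P"
  shows "chi2 P Q = 0 \<longleftrightarrow> P = Q"
proof
  assume chi2_0: "chi2 P Q = 0"
  define r where "r x = enn2real (RN_deriv Q P x)" for x
  have "AE x in Q. ennreal ((r x - 1)\<^sup>2) = 0"
    using chi2_0 ac by (simp add: chi2_def r_def nn_integral_0_iff_AE)
  then have "AE x in Q. ennreal (r x) = 1"
    by eventually_elim simp
  then have "density Q (\<lambda>x. ennreal (r x)) = density Q (\<lambda>_. 1)"
    by (intro density_cong) (auto simp: r_def)
  then show "P = Q"
    using density_enn2real_RN_deriv[OF assms] by (simp add: r_def density_1)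
next
  show "P = Q \<Longrightarrow> chi2 P Q = 0"
    using chi2_self \<open>prob_space Q\<close> by blast
qed

lemma bind_in_space_prob_algebra:
  assumes "P \<in> space (prob_algebra M)" and "K \<in> M \<rightarrow>\<^sub>M prob_algebra N"
  shows "bind P K \<in> space (prob_algebra N)"
  using sets_bind'[OF assms] prob_space_bind'[OF assms] by (simp add: space_prob_algebra)

lemma absolutely_continuous_bind:
  assumes P: "P \<in> space (prob_algebra M)" and Q: "Q \<in> space (prob_algebra M)"
    and ac: "absolutely_continuous Q P" and K: "K \<in> M \<rightarrow>\<^sub>M prob_algebra N"
  shows "absolutely_continuous (bind Q K) (bind P K)"
  unfolding absolutely_continuous_def
proof
  fix X assume X: "X \<in> null_sets (bind Q K)"
  then have X_sets: "X \<in> sets N"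
    using sets_bind'[OF Q K] by auto
  have sets_P: "sets P = sets M" and sets_Q: "sets Q = sets M"
    using P Q by (auto simp: space_prob_algebra)
  have K_X: "(\<lambda>x. emeasure (K x) X) \<in> borel_measurable M"
    using measurable_compose[OF measurable_prob_algebraD[OF K] measurable_emeasure_subprob_algebra[OF X_sets]] .
  have K_X_P: "(\<lambda>x. emeasure (K x) X) \<in> borel_measurable P"
    and K_X_Q: "(\<lambda>x. emeasure (K x) X) \<in> borel_measurable Q"
    using K_X by (simp_all add: measurable_cong_sets[OF sets_P] measurable_cong_sets[OF sets_Q])
  have "(\<integral>\<^sup>+x. emeasure (K x) X \<partial>Q) = 0"
    using X emeasure_bind_prob_algebra[OF Q K X_sets] by auto
  then have "AE x in Q. emeasure (K x) X = 0"
    using nn_integral_0_iff_AE[OF K_X_Q] by simp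
  then have "AE x in P. emeasure (K x) X = 0"
    using sets_P sets_Q by (intro absolutely_continuous_AE[OF _ ac]) simp
  then have "(\<integral>\<^sup>+x. emeasure (K x) X \<partial>P) = 0"
    using nn_integral_0_iff_AE[OF K_X_P] by simp
  then show "X \<in> null_sets (bind P K)"
    using emeasure_bind_prob_algebra[OF P K X_sets] sets_bind'[OF P K] X_sets
    by (intro null_setsI) auto
qed

lemma chi2_bind_le:
  assumes P: "P \<in> space (prob_algebra M)" and Q: "Q \<in> space (prob_algebra M)"
    and ac: "absolutely_continuous Q P" and K: "K \<in> M \<rightarrow>\<^sub>M prob_algebra M"
    and finite: "chi2 P Q < \<infinity>"
  shows "chi2 (bind P K) (bind Q K) \<le> chi2_contraction M K * chi2 P Q"
proof (cases "chi2 P Q = 0")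
  case True
  have "prob_space P" "prob_space Q" "sets P = sets Q"
    using P Q by (auto simp: space_prob_algebra)
  with True ac have "P = Q"
    using chi2_eq_0_iff by blast
  then show ?thesis
    using chi2_self[OF prob_space_bind'[OF Q K]] by simp
next
  case False
  let ?ratio = "\<lambda>PQ. chi2 (bind (fst PQ) K) (bind (snd PQ) K) / chi2 (fst PQ) (snd PQ)"
  have "chi2 (bind P K) (bind Q K) = chi2 P Q * ?ratio (P, Q)"
    using False finite mult_divide_eq_ennreal[of "chi2 P Q" "chi2 (bind P K) (bind Q K)"]
    by (simp add: ennreal_times_divide mult.commute)
  also have "\<dots> \<le> chi2 P Q * chi2_contraction M K"
    unfolding chi2_contraction_def using P Q ac False finite
    by (intro mult_left_mono SUP_upper) (auto simp: zero_less_iff_neq_zero)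
  finally show ?thesis
    by (simp add: mult.commute)
qed

lemma propagate_in_space_prob_algebra:
  assumes "P \<in> space (prob_algebra M)"
    and "\<And>u. t \<le> u \<Longrightarrow> u < t + k \<Longrightarrow> K u \<in> M \<rightarrow>\<^sub>M prob_algebra M"
  shows "propagate K t k P \<in> space (prob_algebra M)"
  using assms(2) by (induction k) (auto intro!: bind_in_space_prob_algebra assms(1))

lemma absolutely_continuous_propagate:
  assumes "P \<in> space (prob_algebra M)" and "Q \<in> space (prob_algebra M)"
    and "absolutely_continuous Q P"
    and "\<And>u. t \<le> u \<Longrightarrow> u < t + k \<Longrightarrow> K u \<in> M \<rightarrow>\<^sub>M prob_algebra M"
  shows "absolutely_continuous (propagate K t k Q) (propagate K t k P)"
  using assms(4)
proof (induction k)
  case (Suc k)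
  have K_k: "K (t + k) \<in> M \<rightarrow>\<^sub>M prob_algebra M"
    using Suc.prems by simp
  have "propagate K t k P \<in> space (prob_algebra M)" "propagate K t k Q \<in> space (prob_algebra M)"
    using Suc.prems assms(1,2) by (auto intro!: propagate_in_space_prob_algebra)
  then show ?case
    using Suc by (simp add: absolutely_continuous_bind[OF _ _ _ K_k])
qed (simp add: assms(3))

lemma chi2_propagate_le:
  assumes P: "P \<in> space (prob_algebra M)" and Q: "Q \<in> space (prob_algebra M)"
    and ac: "absolutely_continuous Q P"
    and K: "\<And>u. t \<le> u \<Longrightarrow> u < t + k \<Longrightarrow> K u \<in> M \<rightarrow>\<^sub>M prob_algebra M"
    and contraction: "\<And>u. t \<le> u \<Longrightarrow> u < t + k \<Longrightarrow> chi2_contraction M (K u) \<le> ennreal \<eta>"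
    and "0 \<le> \<eta>" and chi2_le: "chi2 P Q \<le> ennreal C"
  shows "chi2 (propagate K t k P) (propagate K t k Q) \<le> ennreal (\<eta> ^ k * C)"
  using K contraction
proof (induction k)
  case 0
  then show ?case
    using chi2_le by simp
next
  case (Suc k)
  let ?P = "propagate K t k P" and ?Q = "propagate K t k Q"
  have IH: "chi2 ?P ?Q \<le> ennreal (\<eta> ^ k * C)"
    using Suc by simp
  have "?P \<in> space (prob_algebra M)" "?Q \<in> space (prob_algebra M)"
    using Suc.prems P Q by (auto intro!: propagate_in_space_prob_algebra)
  moreover have "absolutely_continuous ?Q ?P"
    using Suc.prems(1) by (intro absolutely_continuous_propagate[OF P Q ac]) simp
  moreover have "K (t + k) \<in> M \<rightarrow>\<^sub>M prob_algebra M"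
    using Suc.prems(1) by simp
  moreover have "chi2 ?P ?Q < \<infinity>"
    using le_less_trans[OF IH ennreal_less_top] by simp
  ultimately have "chi2 (propagate K t (Suc k) P) (propagate K t (Suc k) Q)
      \<le> chi2_contraction M (K (t + k)) * chi2 ?P ?Q"
    unfolding propagate.simps(2) by (rule chi2_bind_le)
  also have "\<dots> \<le> ennreal \<eta> * ennreal (\<eta> ^ k * C)"
    using Suc.prems(2) IH by (intro mult_mono) auto
  also have "\<dots> = ennreal (\<eta> ^ Suc k * C)"
    using \<open>0 \<le> \<eta>\<close> by (simp add: ennreal_mult' mult.assoc)
  finally show ?case .
qed

lemma propagate_prob_diff_sq_le:
  assumes P: "P \<in> space (prob_algebra M)" and Q: "Q \<in> space (prob_algebra M)"
    and ac: "absolutely_continuous Q P"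
    and K: "\<And>u. t \<le> u \<Longrightarrow> u < t + k \<Longrightarrow> K u \<in> M \<rightarrow>\<^sub>M prob_algebra M"
    and "\<And>u. t \<le> u \<Longrightarrow> u < t + k \<Longrightarrow> chi2_contraction M (K u) \<le> ennreal \<eta>"
    and "0 \<le> \<eta>" and "chi2 P Q \<le> ennreal C" and "0 \<le> C" and A: "A \<in> sets M"
  shows "(measure (propagate K t k P) A - measure (propagate K t k Q) A)\<^sup>2
           \<le> \<eta> ^ k * C * measure (propagate K t k Q) A * (1 - measure (propagate K t k Q) A)"
proof -
  have "propagate K t k P \<in> space (prob_algebra M)" "propagate K t k Q \<in> space (prob_algebra M)"
    using P Q K by (auto intro!: propagate_in_space_prob_algebra)
  moreover have "absolutely_continuous (propagate K t k Q) (propagate K t k P)"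
    using P Q ac K by (rule absolutely_continuous_propagate)
  moreover have "chi2 (propagate K t k P) (propagate K t k Q) \<le> ennreal (\<eta> ^ k * C)"
    using assms(1-7) by (rule chi2_propagate_le)
  ultimately show ?thesis
    using A \<open>0 \<le> \<eta>\<close> \<open>0 \<le> C\<close> by (intro prob_diff_sq_le_chi2) (auto simp: space_prob_algebra)
qed

lemma prob_diff_sq_le_likelihood_ratio:
  fixes p q :: "'a pmf" and L :: "'a \<Rightarrow> real"
  assumes fin: "finite (set_pmf q)" and ratio: "\<And>x. pmf p x = L x * pmf q x"
  shows "4 * (measure_pmf.prob q A - measure_pmf.prob p A)\<^sup>2
           \<le> measure_pmf.expectation q (\<lambda>x. (L x)\<^sup>2) - 1"
proof -
  let ?S = "set_pmf q"
  have set_p: "set_pmf p \<subseteq> ?S"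
    using ratio by (auto simp: set_pmf_eq)
  have sum_q: "(\<Sum>x\<in>?S. pmf q x) = 1"
    using sum_pmf_eq_1[OF fin] by simp
  have sum_p: "(\<Sum>x\<in>?S. L x * pmf q x) = 1"
    using sum_pmf_eq_1[OF fin set_p] by (simp add: ratio)
  have expectation_eq: "measure_pmf.expectation r g = (\<Sum>x\<in>?S. g x * pmf r x)"
    if "set_pmf r \<subseteq> ?S" for r and g :: "'a \<Rightarrow> real"
    using that by (intro integral_measure_pmf_real[OF fin]) auto
  have prob_q: "measure_pmf.prob q A = (\<Sum>x\<in>?S. indicator A x * pmf q x)"
    using expectation_eq[of q "indicator A"] by simp
  have prob_p: "measure_pmf.prob p A = (\<Sum>x\<in>?S. indicator A x * (L x * pmf q x))"
    using expectation_eq[OF set_p, of "indicator A"] by (simp add: ratio)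
  define w where "w x = sqrt (pmf q x)" for x
  have w_sq: "(w x)\<^sup>2 = pmf q x" for x
    by (simp add: w_def)
  txt \<open>Since both distributions have mass one, centring the indicator of \<open>A\<close> at \<open>1/2\<close>
    does not change the difference and makes the second Cauchy--Schwarz factor \<open>1/4\<close>.\<close>
  have "measure_pmf.prob q A - measure_pmf.prob p A
      = (\<Sum>x\<in>?S. pmf q x * (1 - L x) * (indicator A x - 1/2))"
    unfolding prob_q prob_p using sum_q sum_p
    by (simp add: algebra_simps sum_subtractf sum.distrib sum_distrib_left[symmetric]
        flip: sum_divide_distrib)
  also have "\<dots> = (\<Sum>x\<in>?S. (w x * (1 - L x)) * (w x * (indicator A x - 1/2)))"
    by (intro sum.cong) (auto simp: w_sq[symmetric] power2_eq_square)
  finally have "(measure_pmf.prob q A - measure_pmf.prob p A)\<^sup>2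
      \<le> (\<Sum>x\<in>?S. (w x * (1 - L x))\<^sup>2) * (\<Sum>x\<in>?S. (w x * (indicator A x - 1/2))\<^sup>2)"
    by (simp only: Cauchy_Schwarz_ineq_sum)
  also have "(\<Sum>x\<in>?S. (w x * (indicator A x - 1/2))\<^sup>2) = (\<Sum>x\<in>?S. pmf q x / 4)"
    by (intro sum.cong) (auto simp: power_mult_distrib w_sq power_divide split: split_indicator)
  also have "\<dots> = 1/4"
    using sum_q by (simp flip: sum_divide_distrib)
  also have "(\<Sum>x\<in>?S. (w x * (1 - L x))\<^sup>2)
      = (\<Sum>x\<in>?S. pmf q x - 2 * (L x * pmf q x) + (L x)\<^sup>2 * pmf q x)"
  proof (intro sum.cong)
    fix x
    have "(w x * (1 - L x))\<^sup>2 = pmf q x * (1 - L x)\<^sup>2"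
      by (simp add: power_mult_distrib w_sq)
    then show "(w x * (1 - L x))\<^sup>2 = pmf q x - 2 * (L x * pmf q x) + (L x)\<^sup>2 * pmf q x"
      by (simp add: power2_diff algebra_simps)
  qed simp
  also have "\<dots> = (\<Sum>x\<in>?S. pmf q x) - 2 * (\<Sum>x\<in>?S. L x * pmf q x) + (\<Sum>x\<in>?S. (L x)\<^sup>2 * pmf q x)"
    by (simp add: sum.distrib sum_subtractf sum_distrib_left)
  also have "\<dots> = measure_pmf.expectation q (\<lambda>x. (L x)\<^sup>2) - 1"
    using sum_q sum_p expectation_eq[of q "\<lambda>x. (L x)\<^sup>2"] by simp
  finally show ?thesis
    by simp
qed

lemma pmf_Pi_pmf_likelihood_ratio:
  assumes "finite I" and "\<And>b. pmf p b = l b * pmf q b"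
  shows "pmf (Pi_pmf I d (\<lambda>_. p)) x = (\<Prod>i\<in>I. l (x i)) * pmf (Pi_pmf I d (\<lambda>_. q)) x"
  using assms by (auto simp: pmf_Pi prod.distrib)

lemma expectation_bernoulli_likelihood_ratio_sq:
  fixes p q :: real
  assumes "0 \<le> p" "p \<le> 1" "0 < q" "q < 1"
  shows "measure_pmf.expectation (bernoulli_pmf q)
           (\<lambda>b. (pmf (bernoulli_pmf p) b / pmf (bernoulli_pmf q) b)\<^sup>2)
         = 1 + (p - q)\<^sup>2 / (q * (1 - q))"
proof -
  define s where "s = 1 - q"
  have "q \<noteq> 0" "s \<noteq> 0"
    using assms by (auto simp: s_def)
  have "measure_pmf.expectation (bernoulli_pmf q)
          (\<lambda>b. (pmf (bernoulli_pmf p) b / pmf (bernoulli_pmf q) b)\<^sup>2)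
      = (p / q)\<^sup>2 * q + ((1 - p) / s)\<^sup>2 * s"
    using assms by (simp add: s_def)
  also have "\<dots> = (p\<^sup>2 * s + (1 - p)\<^sup>2 * q) / (q * s)"
    using \<open>q \<noteq> 0\<close> \<open>s \<noteq> 0\<close> by (simp add: field_simps power2_eq_square)
  also have "p\<^sup>2 * s + (1 - p)\<^sup>2 * q = q * s + (p - q)\<^sup>2"
    by (simp add: s_def power2_eq_square algebra_simps)
  finally show ?thesis
    using \<open>q \<noteq> 0\<close> \<open>s \<noteq> 0\<close> by (simp add: s_def add_divide_distrib)
qed

lemma Bernoulli_product_prob_diff_sq_le:
  fixes p0 p1 c :: real and I :: "'i set"
  assumes I: "finite I" and p0: "0 \<le> p0" "p0 \<le> 1" and p1: "0 \<le> p1" "p1 \<le> 1"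
    and "0 \<le> c" and close: "(p0 - p1)\<^sup>2 \<le> c * p1 * (1 - p1)"
  defines "R0 \<equiv> Pi_pmf I False (\<lambda>_. bernoulli_pmf p0)"
    and "R1 \<equiv> Pi_pmf I False (\<lambda>_. bernoulli_pmf p1)"
  shows "4 * (measure_pmf.prob R1 A - measure_pmf.prob R0 A)\<^sup>2 \<le> (1 + c) ^ card I - 1"
proof (cases "0 < p1 \<and> p1 < 1")
  case False
  then have "p0 = p1"
    using close p1 by (cases "p1 = 0") auto
  then show ?thesis
    using \<open>0 \<le> c\<close> by (simp add: R0_def R1_def)
next
  case True
  define l where "l b = pmf (bernoulli_pmf p0) b / pmf (bernoulli_pmf p1) b" for b
  have "pmf (bernoulli_pmf p0) b = l b * pmf (bernoulli_pmf p1) b" for b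
    using True by (cases b) (simp_all add: l_def)
  then have ratio: "pmf R0 x = (\<Prod>i\<in>I. l (x i)) * pmf R1 x" for x
    unfolding R0_def R1_def by (rule pmf_Pi_pmf_likelihood_ratio[OF I])
  have "finite (set_pmf R1)"
    unfolding R1_def by (rule finite_subset[OF set_Pi_pmf_subset'[OF I]]) (auto intro: I)
  then have "4 * (measure_pmf.prob R1 A - measure_pmf.prob R0 A)\<^sup>2
      \<le> measure_pmf.expectation R1 (\<lambda>x. (\<Prod>i\<in>I. l (x i))\<^sup>2) - 1"
    using ratio by (rule prob_diff_sq_le_likelihood_ratio)
  also have "measure_pmf.expectation R1 (\<lambda>x. (\<Prod>i\<in>I. l (x i))\<^sup>2)
      = (\<Prod>i\<in>I. measure_pmf.expectation (bernoulli_pmf p1) (\<lambda>b. (l b)\<^sup>2))"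
    unfolding R1_def prod_power_distrib
    by (intro expectation_prod_Pi_pmf I integrable_measure_pmf_finite) auto
  also have "\<dots> = (1 + (p0 - p1)\<^sup>2 / (p1 * (1 - p1))) ^ card I"
    unfolding l_def using True p0 by (subst expectation_bernoulli_likelihood_ratio_sq) auto
  also have "\<dots> \<le> (1 + c) ^ card I"
    using True close by (intro power_mono) (simp_all add: pos_divide_le_eq mult.assoc)
  finally show ?thesis
    by simp
qed

lemma max_test_errors_ge:
  fixes R0 R1 :: "'a pmf" and \<psi> :: "'a \<Rightarrow> bool"
  shows "(1 - (measure_pmf.prob R1 {r. \<psi> r} - measure_pmf.prob R0 {r. \<psi> r})) / 2
           \<le> max (measure_pmf.prob R0 {r. \<psi> r \<noteq> False}) (measure_pmf.prob R1 {r. \<psi> r \<noteq> True})"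
proof -
  have "{r. \<psi> r \<noteq> True} = space (measure_pmf R1) - {r. \<psi> r}"
    by auto
  then have "measure_pmf.prob R1 {r. \<psi> r \<noteq> True} = 1 - measure_pmf.prob R1 {r. \<psi> r}"
    using measure_pmf.prob_compl[of "{r. \<psi> r}" R1] by simp
  moreover have "{r. \<psi> r \<noteq> False} = {r. \<psi> r}"
    by simp
  ultimately show ?thesis
    by (simp add: field_simps)
qed

lemma Bernoulli_product_test_error_ge:
  fixes p0 p1 c :: real and n :: nat and \<psi> :: "(nat \<Rightarrow> bool) \<Rightarrow> bool"
  assumes "0 \<le> p0" "p0 \<le> 1" "0 \<le> p1" "p1 \<le> 1" "0 \<le> c"
    and "(p0 - p1)\<^sup>2 \<le> c * p1 * (1 - p1)"
  defines "R0 \<equiv> Pi_pmf {..<n} False (\<lambda>_. bernoulli_pmf p0)"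
    and "R1 \<equiv> Pi_pmf {..<n} False (\<lambda>_. bernoulli_pmf p1)"
  shows "1/2 * (1 - sqrt (((1 + c) ^ n - 1) / 2))
           \<le> max (measure_pmf.prob R0 {r. \<psi> r \<noteq> False}) (measure_pmf.prob R1 {r. \<psi> r \<noteq> True})"
proof -
  define D where "D = measure_pmf.prob R1 {r. \<psi> r} - measure_pmf.prob R0 {r. \<psi> r}"
  have "4 * D\<^sup>2 \<le> (1 + c) ^ n - 1"
    using Bernoulli_product_prob_diff_sq_le[of "{..<n}" p0 p1 c] assms(1-6)
    unfolding D_def R0_def R1_def by simp
  then have "D\<^sup>2 \<le> ((1 + c) ^ n - 1) / 2"
    using zero_le_power2[of D] by argo
  then have "D \<le> sqrt (((1 + c) ^ n - 1) / 2)"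
    using real_le_rsqrt by blast
  then show ?thesis
    using max_test_errors_ge[of R1 \<psi> R0] by (simp add: D_def)
qed

lemma error_bound_ge_if_sample_size_le:
  fixes c \<epsilon> :: real
  assumes "0 \<le> c" and "\<epsilon> \<le> 1/2"
    and n: "real n * c \<le> ln (1 + 2 * (1 - 2 * \<epsilon>)\<^sup>2)"
  shows "\<epsilon> \<le> 1/2 * (1 - sqrt (((1 + c) ^ n - 1) / 2))"
proof -
  have "(1 + c) ^ n \<le> exp c ^ n"
    using \<open>0 \<le> c\<close> by (intro power_mono) (auto simp: add.commute exp_ge_add_one_self)
  also have "\<dots> = exp (real n * c)"
    by (simp add: exp_of_nat_mult)
  also have "\<dots> \<le> exp (ln (1 + 2 * (1 - 2 * \<epsilon>)\<^sup>2))"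
    using n by simp
  also have "\<dots> = 1 + 2 * (1 - 2 * \<epsilon>)\<^sup>2"
    by (simp add: add_pos_nonneg)
  finally have "sqrt (((1 + c) ^ n - 1) / 2) \<le> sqrt ((1 - 2 * \<epsilon>)\<^sup>2)"
    by (intro real_sqrt_le_mono) simp
  also have "\<dots> = 1 - 2 * \<epsilon>"
    using \<open>\<epsilon> \<le> 1/2\<close> by simp
  finally show ?thesis
    by simp
qed

theorem corollary3:
  fixes M :: "'a measure"
    and K :: "nat \<Rightarrow> 'a \<Rightarrow> 'a measure"
    and P0 P1 :: "'a measure"
    and g :: "'a \<Rightarrow> bool"
    and t H n :: nat
    and \<Delta> \<eta> \<epsilon> :: real
  assumes t_range: "1 \<le> t" "t \<le> H"
    and P0_prob: "P0 \<in> space (prob_algebra M)"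
    and P1_prob: "P1 \<in> space (prob_algebra M)"
    and abs_cont: "absolutely_continuous P1 P0"
    and chi2_Delta: "chi2 P0 P1 = ennreal (\<Delta>\<^sup>2)"
    and K_markov: "\<And>u. t \<le> u \<Longrightarrow> u < H \<Longrightarrow> K u \<in> M \<rightarrow>\<^sub>M prob_algebra M"
    and K_contr: "\<And>u. t \<le> u \<Longrightarrow> u < H \<Longrightarrow> chi2_contraction M (K u) \<le> ennreal \<eta>"
    and eta_range: "0 \<le> \<eta>" "\<eta> < 1"
    and g_meas: "g \<in> M \<rightarrow>\<^sub>M count_space UNIV"
    and eps_range: "0 < \<epsilon>" "\<epsilon> < 1/2"
  shows
    "let p0 = measure (propagate K t (H - t) P0) {z \<in> space M. g z};
         p1 = measure (propagate K t (H - t) P1) {z \<in> space M. g z};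
         R0 = Pi_pmf {..<n} False (\<lambda>_. bernoulli_pmf p0);
         R1 = Pi_pmf {..<n} False (\<lambda>_. bernoulli_pmf p1);
         err = (\<lambda>\<psi> :: (nat \<Rightarrow> bool) \<Rightarrow> bool.
                  max (measure_pmf.prob R0 {r. \<psi> r \<noteq> False})
                      (measure_pmf.prob R1 {r. \<psi> r \<noteq> True}))
     in (INF \<psi>. err \<psi>) \<ge>
          1/2 * (1 - sqrt (((1 + \<eta> ^ (H - t) * \<Delta>\<^sup>2) ^ n - 1) / 2))
        \<and> (real n * (\<eta> ^ (H - t) * \<Delta>\<^sup>2) \<le> ln (1 + 2 * (1 - 2 * \<epsilon>)\<^sup>2)
             \<longrightarrow> (\<forall>\<psi>. err \<psi> \<ge> \<epsilon>))"
proof -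
  define c where "c = \<eta> ^ (H - t) * \<Delta>\<^sup>2"
  define A where "A = {z \<in> space M. g z}"
  define p0 where "p0 = measure (propagate K t (H - t) P0) A"
  define p1 where "p1 = measure (propagate K t (H - t) P1) A"
  have K: "K u \<in> M \<rightarrow>\<^sub>M prob_algebra M" "chi2_contraction M (K u) \<le> ennreal \<eta>"
    if "t \<le> u" "u < t + (H - t)" for u
    using that t_range K_markov K_contr by auto
  have "A \<in> sets M"
    using measurable_sets[OF g_meas, of "{True}"] by (simp add: A_def vimage_def Int_def conj_commute)
  then have close: "(p0 - p1)\<^sup>2 \<le> c * p1 * (1 - p1)"
    unfolding p0_def p1_def c_def using P0_prob P1_prob abs_cont K eta_range chi2_Delta
    by (intro propagate_prob_diff_sq_le) auto
  have "prob_space (propagate K t (H - t) P)" if "P \<in> space (prob_algebra M)" for P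
    using propagate_in_space_prob_algebra[of P M t "H - t" K] that K by (simp add: space_prob_algebra)
  then have probs: "0 \<le> p0" "p0 \<le> 1" "0 \<le> p1" "p1 \<le> 1"
    unfolding p0_def p1_def using P0_prob P1_prob by (auto simp: prob_space.prob_le_1)
  define err where "err = (\<lambda>\<psi> :: (nat \<Rightarrow> bool) \<Rightarrow> bool.
    max (measure_pmf.prob (Pi_pmf {..<n} False (\<lambda>_. bernoulli_pmf p0)) {r. \<psi> r \<noteq> False})
        (measure_pmf.prob (Pi_pmf {..<n} False (\<lambda>_. bernoulli_pmf p1)) {r. \<psi> r \<noteq> True}))"
  define bound where "bound = 1/2 * (1 - sqrt (((1 + c) ^ n - 1) / 2))"
  have err_ge: "bound \<le> err \<psi>" for \<psi>
    unfolding bound_def err_def using probs close eta_range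
    by (intro Bernoulli_product_test_error_ge) (auto simp: c_def)
  have "bound \<le> (INF \<psi>. err \<psi>)"
    by (intro cINF_greatest err_ge) simp
  moreover have "\<epsilon> \<le> err \<psi>" if "real n * c \<le> ln (1 + 2 * (1 - 2 * \<epsilon>)\<^sup>2)" for \<psi>
    using error_bound_ge_if_sample_size_le[OF _ _ that] err_ge[of \<psi>] eps_range eta_range
    by (simp add: bound_def c_def)
  ultimately show ?thesis
    unfolding Let_def bound_def err_def c_def p0_def p1_def A_def
    by auto
qed

end
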